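(* Let $\mathbb{K}$ be a skew field and $n\ge 2$. Every duality of $\mathsf{PG}(n,\mathbb{K})$ which is a polar $\{2,2'\}$-kangaroo is anisotropic.
   Context: A duality $\theta$ of $\mathsf{PG}(n,\mathbb{K})$ maps points to hyperplanes and hyperplanes to points (reversing incidence); it acts on incident point–hyperplane pairs by $(p,H)\mapsto(H^\theta,p^\theta)$. For incident pairs $(p,H),(p',H')$ the polar position is $2$ or $2'$ if and only if $p\neq p'$, $H\neq H'$, and ($p\in H'$ or $p'\in H$). $\theta$ is a polar $\{2,2'\}$-kangaroo if no pair is at position $2$ or $2'$ from its image. $\theta$ is anisotropic if it maps every chamber (complete flag) to an opposite chamber. *)

theory Defs
  imports "HOL-Analysis.Finite_Cartesian_Product"
begin

text \<open>The projective space PG(n,K), K a skew field (class division_ring), is modelled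
  on the left vector space K^(n+1) = 'a ^ 'n with CARD('n) = n+1. Scalars act on the left.\<close>

definition lsmult :: "'a::division_ring \<Rightarrow> 'a ^ 'n \<Rightarrow> 'a ^ 'n" where
  "lsmult c x = (\<chi> i. c * x $ i)"

definition lin_comb :: "(nat \<Rightarrow> 'a::division_ring) \<Rightarrow> ('a ^ 'n) list \<Rightarrow> 'a ^ 'n" where
  "lin_comb c vs = (\<Sum>i<length vs. lsmult (c i) (vs ! i))"

definition lin_indep :: "('a::division_ring ^ 'n) list \<Rightarrow> bool" where
  "lin_indep vs \<longleftrightarrow> (\<forall>c. lin_comb c vs = 0 \<longrightarrow> (\<forall>i<length vs. c i = 0))"

definition lspan :: "('a::division_ring ^ 'n) list \<Rightarrow> ('a ^ 'n) set" where
  "lspan vs = {lin_comb c vs | c. True}"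

text \<open>A (vector) subspace of dimension k: the span of k linearly independent vectors.
  Projective points are subspaces of dimension 1, hyperplanes have dimension n = CARD('n) - 1.\<close>
definition subspace_dim :: "nat \<Rightarrow> ('a::division_ring ^ 'n) set \<Rightarrow> bool" where
  "subspace_dim k U \<longleftrightarrow> (\<exists>vs. length vs = k \<and> lin_indep vs \<and> U = lspan vs)"

text \<open>Elements of PG(n,K): subspaces of projective dimension 0..n-1, i.e. vector dimension 1..n.\<close>
definition pg_elements :: "('a::division_ring ^ 'n) set set" where
  "pg_elements = {U. \<exists>k. 1 \<le> k \<and> k < CARD('n) \<and> subspace_dim k U}"

definition is_point :: "('a::division_ring ^ 'n) set \<Rightarrow> bool" where
  "is_point U \<longleftrightarrow> subspace_dim 1 U"

definition is_hyperplane :: "('a::division_ring ^ 'n) set \<Rightarrow> bool" where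
  "is_hyperplane U \<longleftrightarrow> subspace_dim (CARD('n) - 1) U"

definition duality :: "(('a::division_ring ^ 'n) set \<Rightarrow> ('a ^ 'n) set) \<Rightarrow> bool" where
  "duality \<theta> \<longleftrightarrow> bij_betw \<theta> pg_elements pg_elements
     \<and> (\<forall>U\<in>pg_elements. \<forall>W\<in>pg_elements. U \<subseteq> W \<longleftrightarrow> \<theta> W \<subseteq> \<theta> U)
     \<and> (\<forall>k U. 1 \<le> k \<and> k < CARD('n) \<and> subspace_dim k U \<longrightarrow> subspace_dim (CARD('n) - k) (\<theta> U))"

definition polar_pos_2 :: "('a::division_ring ^ 'n) set \<Rightarrow> ('a ^ 'n) set \<Rightarrow> ('a ^ 'n) set \<Rightarrow> ('a ^ 'n) set \<Rightarrow> bool" where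
  "polar_pos_2 p H p' H' \<longleftrightarrow> p \<noteq> p' \<and> H \<noteq> H' \<and> (p \<subseteq> H' \<or> p' \<subseteq> H)"

definition polar_22_kangaroo :: "(('a::division_ring ^ 'n) set \<Rightarrow> ('a ^ 'n) set) \<Rightarrow> bool" where
  "polar_22_kangaroo \<theta> \<longleftrightarrow>
     (\<forall>p H. is_point p \<and> is_hyperplane H \<and> p \<subseteq> H \<longrightarrow> \<not> polar_pos_2 p H (\<theta> H) (\<theta> p))"

definition chamber :: "(nat \<Rightarrow> ('a::division_ring ^ 'n) set) \<Rightarrow> bool" where
  "chamber F \<longleftrightarrow> (\<forall>i. 1 \<le> i \<and> i < CARD('n) \<longrightarrow> subspace_dim i (F i))
     \<and> (\<forall>i. 1 \<le> i \<and> i + 1 < CARD('n) \<longrightarrow> F i \<subseteq> F (i + 1))"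

definition opposite_chambers :: "(nat \<Rightarrow> ('a::division_ring ^ 'n) set) \<Rightarrow> (nat \<Rightarrow> ('a ^ 'n) set) \<Rightarrow> bool" where
  "opposite_chambers F G \<longleftrightarrow> (\<forall>i. 1 \<le> i \<and> i < CARD('n) \<longrightarrow> F i \<inter> G (CARD('n) - i) = {0})"

definition chamber_image :: "(('a::division_ring ^ 'n) set \<Rightarrow> ('a ^ 'n) set) \<Rightarrow> (nat \<Rightarrow> ('a ^ 'n) set) \<Rightarrow> (nat \<Rightarrow> ('a ^ 'n) set)" where
  "chamber_image \<theta> F = (\<lambda>i. \<theta> (F (CARD('n) - i)))"

definition anisotropic :: "(('a::division_ring ^ 'n) set \<Rightarrow> ('a ^ 'n) set) \<Rightarrow> bool" where
  "anisotropic \<theta> \<longleftrightarrow> (\<forall>F. chamber F \<longrightarrow> opposite_chambers F (chamber_image \<theta> F))"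

end

theory Submission
  imports Defs
begin

text \<open>If a nonzero vector \<open>v\<close> lay in a subspace \<open>U\<close> and in \<open>U\<^sup>\<theta>\<close>, then \<open>p = \<langle>v\<rangle>\<close> would be
  an absolute point, \<open>p \<subseteq> p\<^sup>\<theta>\<close>. For an absolute point the kangaroo condition leaves only two
  possibilities for a hyperplane \<open>H\<close> through \<open>p\<close>: \<open>H\<^sup>\<theta> = p\<close> or \<open>H = p\<^sup>\<theta>\<close>. Since \<open>\<theta>\<close> is injective,
  at most two hyperplanes pass through \<open>p\<close>, whereas for \<open>n \<ge> 2\<close> there are at least three.
  Hence every element of a chamber meets its image trivially, i.e. \<open>\<theta>\<close> is anisotropic.\<close>

lemma lin_comb_nth: "lin_comb c vs $ i = (\<Sum>m<length vs. c m * vs ! m $ i)"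
  by (simp add: lin_comb_def lsmult_def)

lemma zero_in_lspan: "0 \<in> lspan vs"
proof -
  have "0 = lin_comb (\<lambda>_. 0) vs" by (simp add: vec_eq_iff lin_comb_nth)
  then show ?thesis unfolding lspan_def by blast
qed

lemma lsmult_in_lspan:
  assumes "v \<in> lspan vs"
  shows "lsmult a v \<in> lspan vs"
proof -
  obtain d where d: "v = lin_comb d vs" using assms unfolding lspan_def by blast
  have "lsmult a v = lin_comb (\<lambda>m. a * d m) vs"
    by (simp add: d vec_eq_iff lin_comb_nth lsmult_def sum_distrib_left mult.assoc)
  then show ?thesis unfolding lspan_def by blast
qed

lemma lspan_singleton: "lspan [v] = range (\<lambda>c. lsmult c v)"
proof -
  have "lin_comb c [v] = lsmult (c 0) v" for c by (simp add: lin_comb_def)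
  then show ?thesis unfolding lspan_def by auto
qed

lemma lspan_singleton_subset: "v \<in> lspan vs \<Longrightarrow> lspan [v] \<subseteq> lspan vs"
  using lsmult_in_lspan unfolding lspan_singleton by blast

lemma subspace_dim_zero_mem: "subspace_dim k U \<Longrightarrow> 0 \<in> U"
  using zero_in_lspan unfolding subspace_dim_def by blast

lemma subspace_dim_lspan_singleton_subset: "subspace_dim k U \<Longrightarrow> v \<in> U \<Longrightarrow> lspan [v] \<subseteq> U"
  using lspan_singleton_subset unfolding subspace_dim_def by blast

lemma is_point_lspan_singleton:
  fixes v :: "'a::division_ring ^ 'n"
  assumes "v \<noteq> 0"
  shows "is_point (lspan [v])"
proof -
  obtain a where a: "v $ a \<noteq> 0" using assms by (auto simp: vec_eq_iff)
  have "lin_indep [v]"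
    unfolding lin_indep_def
  proof (intro allI impI)
    fix c i assume "lin_comb c [v] = 0" "i < length [v]"
    then have "c 0 * v $ a = 0" "i = 0" by (auto simp: vec_eq_iff lin_comb_nth)
    then show "c i = 0" using a by simp
  qed
  then show ?thesis unfolding is_point_def subspace_dim_def by (intro exI[of _ "[v]"]) simp
qed

lemma subspace_dim_in_pg_elements:
  "subspace_dim k U \<Longrightarrow> 1 \<le> k \<Longrightarrow> k < CARD('n) \<Longrightarrow> (U :: ('a::division_ring ^ 'n) set) \<in> pg_elements"
  unfolding pg_elements_def by blast

text \<open>The coefficients of a linear form act on the right, since \<open>K\<^sup>n\<^sup>+\<^sup>1\<close> is a left vector space.\<close>

definition lform :: "'a::division_ring ^ 'n \<Rightarrow> 'a ^ 'n \<Rightarrow> 'a" where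
  "lform \<phi> x = (\<Sum>j\<in>UNIV. x $ j * \<phi> $ j)"

lemma lform_axis_left: "lform (axis j c) x = x $ j * c"
proof -
  have "lform (axis j c) x = (\<Sum>i\<in>UNIV. if i = j then x $ j * c else 0)"
    unfolding lform_def by (intro sum.cong) (auto simp: axis_def)
  then show ?thesis by simp
qed

lemma lform_axis_right: "lform \<phi> (axis j c) = c * \<phi> $ j"
proof -
  have "lform \<phi> (axis j c) = (\<Sum>i\<in>UNIV. if i = j then c * \<phi> $ j else 0)"
    unfolding lform_def by (intro sum.cong) (auto simp: axis_def)
  then show ?thesis by simp
qed

lemma lform_add_left: "lform (\<phi> + \<psi>) x = lform \<phi> x + lform \<psi> x"
  by (simp add: lform_def distrib_left sum.distrib)

lemma lform_diff_left: "lform (\<phi> - \<psi>) x = lform \<phi> x - lform \<psi> x"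
  by (simp add: lform_def right_diff_distrib sum_subtractf)

lemma lform_diff_right: "lform \<phi> (x - y) = lform \<phi> x - lform \<phi> y"
  by (simp add: lform_def left_diff_distrib sum_subtractf)

lemma lform_lin_comb: "lform \<phi> (lin_comb c vs) = (\<Sum>m<length vs. c m * lform \<phi> (vs ! m))"
proof -
  have "lform \<phi> (lin_comb c vs) = (\<Sum>j\<in>UNIV. \<Sum>m<length vs. c m * (vs ! m $ j * \<phi> $ j))"
    unfolding lform_def lin_comb_nth by (simp add: sum_distrib_right mult.assoc)
  also have "\<dots> = (\<Sum>m<length vs. c m * lform \<phi> (vs ! m))"
    by (subst sum.swap) (simp add: lform_def sum_distrib_left)
  finally show ?thesis .
qed

lemma lin_indep_kernel_basis:
  fixes t :: "'n::finite \<Rightarrow> 'a::division_ring"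
  assumes "distinct xs" "k \<notin> set xs"
  shows "lin_indep (map (\<lambda>j. axis j 1 - axis k (t j)) xs)" (is "lin_indep ?vs")
  unfolding lin_indep_def
proof (intro allI impI)
  fix c m0 assume c: "lin_comb c ?vs = 0" and m0: "m0 < length ?vs"
  have "0 = lin_comb c ?vs $ (xs ! m0)" using c by simp
  also have "\<dots> = (\<Sum>m<length ?vs. if m = m0 then c m else 0)"
    unfolding lin_comb_nth
  proof (intro sum.cong refl)
    fix m assume "m \<in> {..<length ?vs}"
    then show "c m * ?vs ! m $ (xs ! m0) = (if m = m0 then c m else 0)"
      using m0 assms nth_mem[of m0 xs] by (auto simp: axis_def nth_eq_iff_index_eq)
  qed
  also have "\<dots> = c m0" using m0 by simp
  finally show "c m0 = 0" by simp
qed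

lemma kernel_eq_lspan_kernel_basis:
  fixes \<phi> :: "'a::division_ring ^ 'n"
  assumes "\<phi> $ k \<noteq> 0" "distinct xs" "set xs = UNIV - {k}"
  shows "{x. lform \<phi> x = 0} = lspan (map (\<lambda>j. axis j 1 - axis k (\<phi> $ j * inverse (\<phi> $ k))) xs)"
    (is "_ = lspan (map ?b xs)")
proof (intro equalityI subsetI)
  fix x assume "x \<in> {x. lform \<phi> x = 0}"
  then have x: "lform \<phi> x = 0" by simp
  have "x = lin_comb (\<lambda>m. x $ (xs ! m)) (map ?b xs)"
  proof (subst vec_eq_iff, intro allI)
    fix i
    have "lin_comb (\<lambda>m. x $ (xs ! m)) (map ?b xs) $ i = (\<Sum>m<length xs. x $ (xs ! m) * ?b (xs ! m) $ i)"
      by (simp add: lin_comb_nth)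
    also have "\<dots> = (\<Sum>j\<in>UNIV - {k}. x $ j * ?b j $ i)"
      using sum.reindex_bij_betw[OF bij_betw_nth[OF assms(2) refl refl]] assms(3) by simp
    also have "\<dots> = x $ i"
    proof (cases "i = k")
      case True
      have "lform \<phi> x = x $ k * \<phi> $ k + (\<Sum>j\<in>UNIV - {k}. x $ j * \<phi> $ j)"
        unfolding lform_def by (simp add: sum.remove)
      then have "(\<Sum>j\<in>UNIV - {k}. x $ j * \<phi> $ j) = - (x $ k * \<phi> $ k)"
        using x by (simp add: add_eq_0_iff2)
      moreover have "(\<Sum>j\<in>UNIV - {k}. x $ j * ?b j $ i) = - (\<Sum>j\<in>UNIV - {k}. x $ j * \<phi> $ j) * inverse (\<phi> $ k)"
        using True by (simp add: axis_def sum_distrib_right sum_negf[symmetric] mult.assoc)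
      ultimately show ?thesis using True assms(1) by (simp add: mult.assoc)
    next
      case False
      have "(\<Sum>j\<in>UNIV - {k}. x $ j * ?b j $ i) = (\<Sum>j\<in>UNIV - {k}. if j = i then x $ i else 0)"
        using False by (intro sum.cong) (auto simp: axis_def)
      then show ?thesis using False by simp
    qed
    finally show "x $ i = lin_comb (\<lambda>m. x $ (xs ! m)) (map ?b xs) $ i" by simp
  qed
  then show "x \<in> lspan (map ?b xs)" unfolding lspan_def by blast
next
  fix x assume "x \<in> lspan (map ?b xs)"
  then obtain c where x: "x = lin_comb c (map ?b xs)" unfolding lspan_def by blast
  have "lform \<phi> (?b j) = 0" for j
    using assms(1) by (simp add: lform_diff_right lform_axis_right mult.assoc)
  then show "x \<in> {x. lform \<phi> x = 0}" by (simp add: x lform_lin_comb)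
qed

lemma is_hyperplane_kernel:
  fixes \<phi> :: "'a::division_ring ^ 'n"
  assumes "\<phi> \<noteq> 0"
  shows "is_hyperplane {x. lform \<phi> x = 0}"
proof -
  obtain k where k: "\<phi> $ k \<noteq> 0" using assms by (auto simp: vec_eq_iff)
  obtain xs where xs: "distinct xs" "set xs = UNIV - {k}"
    using finite_distinct_list[of "UNIV - {k}"] by auto
  have "length xs = CARD('n) - 1"
    using distinct_card[OF xs(1)] xs(2) by (simp add: card_Diff_singleton)
  then show ?thesis
    unfolding is_hyperplane_def subspace_dim_def
    using kernel_eq_lspan_kernel_basis[OF k xs] lin_indep_kernel_basis[OF xs(1)] xs(2)
    by (intro exI[of _ "map _ xs"]) auto
qed

lemma obtain_two_distinct_from:
  fixes a :: "'n::finite"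
  assumes "CARD('n) \<ge> 3"
  obtains b c where "b \<noteq> a" "c \<noteq> a" "b \<noteq> c"
proof -
  have "\<not> UNIV \<subseteq> {a, b}" for b :: 'n
    using card_mono[of "{a, b}" UNIV] card_insert_le_m1[of 2 "{b}" a] assms by auto
  then obtain b c :: 'n where "b \<noteq> a" "c \<notin> {a, b}" by blast
  then show ?thesis using that by blast
qed

lemma three_hyperplanes_through_vector:
  fixes v :: "'a::division_ring ^ 'n"
  assumes "CARD('n) \<ge> 3" "v \<noteq> 0"
  obtains H1 H2 H3 where "is_hyperplane H1" "is_hyperplane H2" "is_hyperplane H3"
    "v \<in> H1" "v \<in> H2" "v \<in> H3" "H1 \<noteq> H2" "H1 \<noteq> H3" "H2 \<noteq> H3"
proof -
  obtain a where a: "v $ a \<noteq> 0" using assms(2) by (auto simp: vec_eq_iff)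
  obtain b c where bc: "b \<noteq> a" "c \<noteq> a" "b \<noteq> c" using obtain_two_distinct_from[OF assms(1)] .
  define \<phi> where "\<phi> j = axis j 1 - axis a (inverse (v $ a) * v $ j)" for j
  have \<phi>_v: "lform (\<phi> j) v = 0" for j
    using a by (simp add: \<phi>_def lform_diff_left lform_axis_left mult.assoc[symmetric])
  have \<phi>_nth: "\<phi> b $ b = 1" "\<phi> b $ c = 0" "\<phi> c $ c = 1" "\<phi> c $ b = 0"
    using bc by (auto simp: \<phi>_def axis_def)
  define H where "H \<psi> = {x. lform \<psi> x = 0}" for \<psi> :: "'a ^ 'n"
  show ?thesis
  proof (rule that[of "H (\<phi> b)" "H (\<phi> c)" "H (\<phi> b + \<phi> c)"])
    show "is_hyperplane (H (\<phi> b))" "is_hyperplane (H (\<phi> c))" "is_hyperplane (H (\<phi> b + \<phi> c))"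
      unfolding H_def using \<phi>_nth
      by (auto intro!: is_hyperplane_kernel dest: arg_cong[where f = "\<lambda>\<psi>. \<psi> $ b"])
    show "v \<in> H (\<phi> b)" "v \<in> H (\<phi> c)" "v \<in> H (\<phi> b + \<phi> c)"
      by (simp_all add: H_def \<phi>_v lform_add_left)
    have "axis c 1 \<in> H (\<phi> b)" "axis c 1 \<notin> H (\<phi> c)" "axis c 1 \<notin> H (\<phi> b + \<phi> c)"
      "axis b 1 \<in> H (\<phi> c)" "axis b 1 \<notin> H (\<phi> b + \<phi> c)"
      by (simp_all add: H_def lform_axis_right \<phi>_nth)
    then show "H (\<phi> b) \<noteq> H (\<phi> c)" "H (\<phi> b) \<noteq> H (\<phi> b + \<phi> c)" "H (\<phi> c) \<noteq> H (\<phi> b + \<phi> c)"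
      by blast+
  qed
qed

lemma is_hyperplane_in_pg_elements:
  "is_hyperplane H \<Longrightarrow> CARD('n) \<ge> 2 \<Longrightarrow> (H :: ('a::division_ring ^ 'n) set) \<in> pg_elements"
  unfolding is_hyperplane_def by (rule subspace_dim_in_pg_elements) auto

lemma pg_elements_lspan_singleton_subset: "U \<in> pg_elements \<Longrightarrow> v \<in> U \<Longrightarrow> lspan [v] \<subseteq> U"
  unfolding pg_elements_def using subspace_dim_lspan_singleton_subset by blast

lemma duality_in_pg_elements: "duality \<theta> \<Longrightarrow> U \<in> pg_elements \<Longrightarrow> \<theta> U \<in> pg_elements"
  unfolding duality_def bij_betw_def by blast

lemma duality_antimono:
  "duality \<theta> \<Longrightarrow> U \<in> pg_elements \<Longrightarrow> W \<in> pg_elements \<Longrightarrow> U \<subseteq> W \<Longrightarrow> \<theta> W \<subseteq> \<theta> U"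
  unfolding duality_def by blast

lemma duality_absolute_point:
  fixes \<theta> :: "('a::division_ring ^ 'n) set \<Rightarrow> ('a ^ 'n) set"
  assumes "duality \<theta>" "CARD('n) \<ge> 2" "U \<in> pg_elements" "v \<in> U" "v \<in> \<theta> U" "v \<noteq> 0"
  shows "lspan [v] \<subseteq> \<theta> (lspan [v])"
proof -
  have p: "lspan [v] \<in> pg_elements"
    using is_point_lspan_singleton[OF assms(6)] assms(2)
    unfolding is_point_def by (intro subspace_dim_in_pg_elements) auto
  have "lspan [v] \<subseteq> \<theta> U"
    using pg_elements_lspan_singleton_subset[OF duality_in_pg_elements[OF assms(1,3)] assms(5)] .
  also have "\<theta> U \<subseteq> \<theta> (lspan [v])"
    using duality_antimono[OF assms(1) p assms(3) pg_elements_lspan_singleton_subset[OF assms(3,4)]] .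
  finally show ?thesis .
qed

lemma kangaroo_hyperplane_through_absolute_point:
  assumes "polar_22_kangaroo \<theta>" "is_point p" "is_hyperplane H" "p \<subseteq> H" "p \<subseteq> \<theta> p"
  shows "\<theta> H = p \<or> H = \<theta> p"
  using assms unfolding polar_22_kangaroo_def polar_pos_2_def by blast

lemma kangaroo_no_absolute_point:
  fixes \<theta> :: "('a::division_ring ^ 'n) set \<Rightarrow> ('a ^ 'n) set"
  assumes "CARD('n) \<ge> 3" "duality \<theta>" "polar_22_kangaroo \<theta>" "v \<noteq> 0"
  shows "\<not> lspan [v] \<subseteq> \<theta> (lspan [v])"
proof
  assume absolute: "lspan [v] \<subseteq> \<theta> (lspan [v])"
  have through: "\<theta> H = lspan [v] \<or> H = \<theta> (lspan [v])" if "is_hyperplane H" "v \<in> H" for H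
  proof -
    have "lspan [v] \<subseteq> H"
      using that subspace_dim_lspan_singleton_subset unfolding is_hyperplane_def by blast
    then show ?thesis
      using kangaroo_hyperplane_through_absolute_point[OF assms(3)
          is_point_lspan_singleton[OF assms(4)] that(1) _ absolute] by blast
  qed
  obtain H1 H2 H3 where H: "is_hyperplane H1" "is_hyperplane H2" "is_hyperplane H3"
    "v \<in> H1" "v \<in> H2" "v \<in> H3" "H1 \<noteq> H2" "H1 \<noteq> H3" "H2 \<noteq> H3"
    using three_hyperplanes_through_vector[OF assms(1,4)] .
  have "inj_on \<theta> pg_elements" using assms(2) unfolding duality_def bij_betw_def by blast
  moreover have "H1 \<in> pg_elements" "H2 \<in> pg_elements" "H3 \<in> pg_elements"
    using H(1-3) assms(1) by (auto intro: is_hyperplane_in_pg_elements)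
  ultimately have "\<theta> H1 \<noteq> \<theta> H2" "\<theta> H1 \<noteq> \<theta> H3" "\<theta> H2 \<noteq> \<theta> H3"
    using H(7-9) by (auto dest: inj_on_contraD)
  then show False
    using through[OF H(1,4)] through[OF H(2,5)] through[OF H(3,6)] H(7-9) by argo
qed

lemma kangaroo_inter_image_trivial:
  fixes \<theta> :: "('a::division_ring ^ 'n) set \<Rightarrow> ('a ^ 'n) set"
  assumes "CARD('n) \<ge> 3" "duality \<theta>" "polar_22_kangaroo \<theta>" "U \<in> pg_elements"
  shows "U \<inter> \<theta> U = {0}"
proof -
  have "v = 0" if "v \<in> U" "v \<in> \<theta> U" for v
  proof (rule ccontr)
    assume "v \<noteq> 0"
    then have "lspan [v] \<subseteq> \<theta> (lspan [v])"
      using duality_absolute_point[OF assms(2) _ assms(4) that] assms(1) by simp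
    then show False using kangaroo_no_absolute_point[OF assms(1-3) \<open>v \<noteq> 0\<close>] by blast
  qed
  moreover have "0 \<in> U" "0 \<in> \<theta> U"
    using assms duality_in_pg_elements subspace_dim_zero_mem unfolding pg_elements_def by blast+
  ultimately show ?thesis by blast
qed

theorem proposition4p3:
  fixes \<theta> :: "('a::division_ring ^ 'n) set \<Rightarrow> ('a ^ 'n) set"
  assumes "CARD('n) \<ge> 3"
    and "duality \<theta>"
    and "polar_22_kangaroo \<theta>"
  shows "anisotropic \<theta>"
  unfolding anisotropic_def opposite_chambers_def
proof (intro allI impI)
  fix F :: "nat \<Rightarrow> ('a ^ 'n) set" and i
  assume "chamber F" and i: "1 \<le> i \<and> i < CARD('n)"
  then have "F i \<in> pg_elements"
    unfolding chamber_def using subspace_dim_in_pg_elements by blast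
  moreover have "chamber_image \<theta> F (CARD('n) - i) = \<theta> (F i)"
    unfolding chamber_image_def using i by simp
  ultimately show "F i \<inter> chamber_image \<theta> F (CARD('n) - i) = {0}"
    using kangaroo_inter_image_trivial[OF assms] by simp
qed

end
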